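(* Let $p$ be a prime and $d,u$ positive integers with $u\ge2$ if $p=2$. Let $\Gamma=\mathrm{CS}(u,d,p)$ and $\Gamma_i=\mathrm{CS}(u+i-1,d,p)$ for $i\ge1$. For each positive integer $i$ set $\Gamma_i^*=\Gamma_{\lceil \log_p i\rceil+1}$. Then $\{\Gamma_i^*\}_{i\ge1}$ is an $N_p$-sequence for $\Gamma$; that is, $\Gamma=\Gamma_1^*\supseteq\Gamma_2^*\supseteq\cdots$ are normal subgroups of $\Gamma$ with $[\Gamma_i^*,\Gamma_j^*]\subseteq\Gamma_{i+j}^*$ and $(\Gamma_i^* )^p\subseteq \Gamma_{ip}^*$ for all $i,j\ge1$.
   Context: $\mathrm{CS}(i,d,p)=\{A\in \mathrm{Mat}_d(\mathbb{Z}_p)\mid A\equiv I_d \bmod p^i\}$ with $\mathbb{Z}_p$ the $p$-adic integers. $\lceil x\rceil$ is the least integer $\ge x$. For subgroups $A,B$, $[A,B]=\langle aba^{-1}b^{-1}\mid a\in A,b\in B\rangle$, and $A^p=\langle a^p\mid a\in A\rangle$. *)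

theory Defs
  imports Complex_Main "HOL-Algebra.Algebra"
begin

text \<open>p-adic integers as the inverse limit of Z/p^n Z: compatible sequences
  of residues x n in {0..<p^n} with x (n+1) mod p^n = x n.\<close>

definition padic_int :: "nat \<Rightarrow> (nat \<Rightarrow> int) set" where
  "padic_int p = {x. (\<forall>n. 0 \<le> x n \<and> x n < int p ^ n) \<and>
                      (\<forall>n. x (Suc n) mod (int p ^ n) = x n)}"

definition padic_zero :: "nat \<Rightarrow> int" where
  "padic_zero = (\<lambda>n. 0)"

definition padic_one :: "nat \<Rightarrow> (nat \<Rightarrow> int)" where
  "padic_one p = (\<lambda>n. 1 mod (int p ^ n))"

definition padic_mat :: "nat \<Rightarrow> nat \<Rightarrow> (nat \<Rightarrow> nat \<Rightarrow> nat \<Rightarrow> int) set" where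
  "padic_mat d p = {A. (\<forall>i j. i < d \<and> j < d \<longrightarrow> A i j \<in> padic_int p) \<and>
                       (\<forall>i j. \<not> (i < d \<and> j < d) \<longrightarrow> A i j = padic_zero)}"

definition padic_mat_mult :: "nat \<Rightarrow> nat \<Rightarrow> (nat \<Rightarrow> nat \<Rightarrow> nat \<Rightarrow> int) \<Rightarrow>
    (nat \<Rightarrow> nat \<Rightarrow> nat \<Rightarrow> int) \<Rightarrow> (nat \<Rightarrow> nat \<Rightarrow> nat \<Rightarrow> int)" where
  "padic_mat_mult d p A B = (\<lambda>i j. if i < d \<and> j < d
      then (\<lambda>n. (\<Sum>l<d. A i l n * B l j n) mod (int p ^ n))
      else padic_zero)"

definition padic_mat_one :: "nat \<Rightarrow> nat \<Rightarrow> (nat \<Rightarrow> nat \<Rightarrow> nat \<Rightarrow> int)" where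
  "padic_mat_one d p = (\<lambda>i j. if i < d \<and> j < d \<and> i = j then padic_one p else padic_zero)"

text \<open>CS(i,d,p) = {A in Mat_d(Z_p) | A = I mod p^i}; congruence mod p^i of
  p-adic integers means equality of the level-i residues.\<close>

definition CS :: "nat \<Rightarrow> nat \<Rightarrow> nat \<Rightarrow> (nat \<Rightarrow> nat \<Rightarrow> nat \<Rightarrow> int) set" where
  "CS i d p = {A \<in> padic_mat d p. \<forall>a<d. \<forall>b<d. A a b i = padic_mat_one d p a b i}"

definition CS_group :: "nat \<Rightarrow> nat \<Rightarrow> nat \<Rightarrow> (nat \<Rightarrow> nat \<Rightarrow> nat \<Rightarrow> int) monoid" where
  "CS_group u d p = \<lparr>carrier = CS u d p, monoid.mult = padic_mat_mult d p, one = padic_mat_one d p\<rparr>"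

definition Gamma_seq :: "nat \<Rightarrow> nat \<Rightarrow> nat \<Rightarrow> nat \<Rightarrow> (nat \<Rightarrow> nat \<Rightarrow> nat \<Rightarrow> int) set" where
  "Gamma_seq u d p i = CS (u + i - 1) d p"

definition Gamma_star :: "nat \<Rightarrow> nat \<Rightarrow> nat \<Rightarrow> nat \<Rightarrow> (nat \<Rightarrow> nat \<Rightarrow> nat \<Rightarrow> int) set" where
  "Gamma_star u d p i = Gamma_seq u d p (nat \<lceil>log (real p) (real i)\<rceil> + 1)"

definition comm_subgroup :: "('a, 'b) monoid_scheme \<Rightarrow> 'a set \<Rightarrow> 'a set \<Rightarrow> 'a set" where
  "comm_subgroup G A B = generate G
     {a \<otimes>\<^bsub>G\<^esub> b \<otimes>\<^bsub>G\<^esub> inv\<^bsub>G\<^esub> a \<otimes>\<^bsub>G\<^esub> inv\<^bsub>G\<^esub> b | a b. a \<in> A \<and> b \<in> B}"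

definition pow_subgroup :: "('a, 'b) monoid_scheme \<Rightarrow> 'a set \<Rightarrow> nat \<Rightarrow> 'a set" where
  "pow_subgroup G A p = generate G {a [^]\<^bsub>G\<^esub> p | a. a \<in> A}"

end

theory Submission
  imports Defs
begin

text \<open>
  For A = I + E in CS(a) and
  B = I + F in CS(b), p^a divides E and p^b divides F, so AB - BA = EF - FE vanishes modulo
  p^(a+b): commutators of CS(a) and CS(b) lie in CS(a+b). Likewise A^k = I + kE modulo p^(2a),
  so A^p lies in CS(a+1) as soon as a >= 1. Hence A^(p^n) lies in CS(u+n) for A in CS(u), and
  the powers A^(p^n - 1) form a compatible system of inverses of A modulo p^n, whose limit is
  the inverse of A: CS(u) is a group, in which each CS(k) with k >= u is normal, being the set
  of elements congruent to I modulo p^k.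

  As Gamma*_i = CS(u + c(i)) with c(i) = ceil(log_p i), the remaining conditions reduce to
  c(i+j) <= max(c(i), c(j)) + 1 and c(ip) = c(i) + 1.
\<close>

section \<open>Matrices over the p-adic integers\<close>

type_synonym padic_matrix = "nat \<Rightarrow> nat \<Rightarrow> nat \<Rightarrow> int"

lemma padic_int_level_mod:
  assumes x: "x \<in> padic_int p" and "k \<le> n"
  shows "x n mod int p ^ k = x k"
  using \<open>k \<le> n\<close>
proof (induction n)
  case 0
  have "0 \<le> x 0" "x 0 < 1" using x by (auto simp: padic_int_def dest: spec[of _ 0])
  then show ?case using 0 by simp
next
  case (Suc n)
  show ?case
  proof (cases "k = Suc n")
    case True
    have "0 \<le> x k" "x k < int p ^ k" using x by (auto simp: padic_int_def)
    then show ?thesis using True by simp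
  next
    case False
    then have "k \<le> n" using Suc by simp
    have "x (Suc n) mod int p ^ k = (x (Suc n) mod int p ^ n) mod int p ^ k"
      using \<open>k \<le> n\<close> by (simp add: mod_mod_cancel le_imp_power_dvd)
    also have "\<dots> = x k" using x Suc.IH \<open>k \<le> n\<close> by (simp add: padic_int_def)
    finally show ?thesis .
  qed
qed

lemma padic_zero_in_padic_int: "0 < p \<Longrightarrow> padic_zero \<in> padic_int p"
  by (simp add: padic_int_def padic_zero_def)

lemma padic_one_in_padic_int: "0 < p \<Longrightarrow> padic_one p \<in> padic_int p"
  by (simp add: padic_int_def padic_one_def mod_mod_cancel le_imp_power_dvd)

lemma sum_mult_mod:
  fixes M :: int
  shows "(\<Sum>l<d. f l * g l) mod M = (\<Sum>l<d. (f l mod M) * (g l mod M)) mod M"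
proof -
  have "(\<Sum>l<d. f l * g l) mod M = (\<Sum>l<d. (f l * g l) mod M) mod M"
    by (rule mod_sum_eq[symmetric])
  also have "\<dots> = (\<Sum>l<d. ((f l mod M) * (g l mod M)) mod M) mod M"
    by (simp only: mod_mult_eq)
  also have "\<dots> = (\<Sum>l<d. (f l mod M) * (g l mod M)) mod M"
    by (rule mod_sum_eq)
  finally show ?thesis .
qed

lemma sum_mult_mod_left:
  fixes M :: int
  shows "(\<Sum>l<d. (f l mod M) * g l) mod M = (\<Sum>l<d. f l * g l) mod M"
  by (subst (1 2) sum_mult_mod) simp

lemma sum_mult_mod_right:
  fixes M :: int
  shows "(\<Sum>l<d. f l * (g l mod M)) mod M = (\<Sum>l<d. f l * g l) mod M"
  by (subst (1 2) sum_mult_mod) simp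

lemma padic_mat_eqI:
  assumes "A \<in> padic_mat d p" "B \<in> padic_mat d p"
    and "\<And>i j n. i < d \<Longrightarrow> j < d \<Longrightarrow> A i j n = B i j n"
  shows "A = B"
proof (intro ext)
  fix i j n
  show "A i j n = B i j n"
  proof (cases "i < d \<and> j < d")
    case True
    then show ?thesis using assms(3) by blast
  next
    case False
    then have "A i j = padic_zero" "B i j = padic_zero"
      using assms(1,2) unfolding padic_mat_def by blast+
    then show ?thesis by simp
  qed
qed

lemma padic_mat_mult_entry:
  "i < d \<Longrightarrow> j < d \<Longrightarrow> padic_mat_mult d p A B i j n = (\<Sum>l<d. A i l n * B l j n) mod int p ^ n"
  by (simp add: padic_mat_mult_def)

lemma padic_mat_one_entry:
  "i < d \<Longrightarrow> j < d \<Longrightarrow> padic_mat_one d p i j n = of_bool (i = j) mod int p ^ n"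
  by (simp add: padic_mat_one_def padic_one_def padic_zero_def)

lemma padic_mat_entry_mod:
  assumes "A \<in> padic_mat d p" "i < d" "j < d"
  shows "A i j n mod int p ^ n = A i j n"
  using assms by (simp add: padic_mat_def padic_int_def)

lemma padic_mat_mult_closed:
  assumes p: "0 < p" and A: "A \<in> padic_mat d p" and B: "B \<in> padic_mat d p"
  shows "padic_mat_mult d p A B \<in> padic_mat d p"
proof -
  have "(\<Sum>l<d. A i l (Suc n) * B l j (Suc n)) mod int p ^ Suc n mod int p ^ n
       = (\<Sum>l<d. A i l n * B l j n) mod int p ^ n" if "i < d" "j < d" for i j n
  proof -
    have "(\<Sum>l<d. A i l (Suc n) * B l j (Suc n)) mod int p ^ Suc n mod int p ^ n
        = (\<Sum>l<d. (A i l (Suc n) mod int p ^ n) * (B l j (Suc n) mod int p ^ n)) mod int p ^ n"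
      by (simp add: mod_mod_cancel sum_mult_mod[symmetric])
    also have "\<dots> = (\<Sum>l<d. A i l n * B l j n) mod int p ^ n"
      using A B that by (intro arg_cong2[where f="(mod)"] sum.cong refl)
        (auto simp: padic_mat_def padic_int_def)
    finally show ?thesis .
  qed
  then show ?thesis
    using p by (auto simp: padic_mat_def padic_mat_mult_def padic_int_def)
qed

lemma padic_mat_one_closed: "0 < p \<Longrightarrow> padic_mat_one d p \<in> padic_mat d p"
  by (simp add: padic_mat_def padic_mat_one_def padic_zero_in_padic_int padic_one_in_padic_int)

lemma padic_mat_mult_one_left:
  assumes p: "0 < p" and A: "A \<in> padic_mat d p"
  shows "padic_mat_mult d p (padic_mat_one d p) A = A"
proof (rule padic_mat_eqI[OF padic_mat_mult_closed[OF p padic_mat_one_closed[OF p] A] A])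
  fix i j n assume ij: "i < d" "j < d"
  then have "{l. l = i \<and> l < d} = {i}" by auto
  then show "padic_mat_mult d p (padic_mat_one d p) A i j n = A i j n"
    using ij padic_mat_entry_mod[OF A]
    by (simp add: padic_mat_mult_entry padic_mat_one_entry sum_mult_mod_left Int_def)
qed

lemma padic_mat_mult_one_right:
  assumes p: "0 < p" and A: "A \<in> padic_mat d p"
  shows "padic_mat_mult d p A (padic_mat_one d p) = A"
proof (rule padic_mat_eqI[OF padic_mat_mult_closed[OF p A padic_mat_one_closed[OF p]] A])
  fix i j n assume ij: "i < d" "j < d"
  then have "{l. l = j \<and> l < d} = {j}" by auto
  then show "padic_mat_mult d p A (padic_mat_one d p) i j n = A i j n"
    using ij padic_mat_entry_mod[OF A]
    by (simp add: padic_mat_mult_entry padic_mat_one_entry sum_mult_mod_right Int_def)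
qed

lemma padic_mat_mult_assoc:
  assumes p: "0 < p" and A: "A \<in> padic_mat d p" and B: "B \<in> padic_mat d p" and C: "C \<in> padic_mat d p"
  shows "padic_mat_mult d p (padic_mat_mult d p A B) C = padic_mat_mult d p A (padic_mat_mult d p B C)"
proof (rule padic_mat_eqI)
  show "padic_mat_mult d p (padic_mat_mult d p A B) C \<in> padic_mat d p"
    and "padic_mat_mult d p A (padic_mat_mult d p B C) \<in> padic_mat d p"
    by (intro padic_mat_mult_closed p A B C)+
  fix i j n assume ij: "i < d" "j < d"
  have "padic_mat_mult d p (padic_mat_mult d p A B) C i j n
      = (\<Sum>l<d. \<Sum>m<d. A i m n * B m l n * C l j n) mod int p ^ n"
    using ij by (simp add: padic_mat_mult_entry sum_mult_mod_left sum_distrib_right)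
  also have "\<dots> = (\<Sum>m<d. A i m n * (\<Sum>l<d. B m l n * C l j n)) mod int p ^ n"
    by (subst sum.swap) (simp add: mult.assoc sum_distrib_left)
  also have "\<dots> = padic_mat_mult d p A (padic_mat_mult d p B C) i j n"
    using ij by (simp add: padic_mat_mult_entry sum_mult_mod_right)
  finally show "padic_mat_mult d p (padic_mat_mult d p A B) C i j n
      = padic_mat_mult d p A (padic_mat_mult d p B C) i j n" .
qed

section \<open>Congruence subgroups\<close>

definition padic_mat_cong :: "nat \<Rightarrow> nat \<Rightarrow> padic_matrix \<Rightarrow> padic_matrix \<Rightarrow> bool" where
  "padic_mat_cong d n A B \<longleftrightarrow> (\<forall>i<d. \<forall>j<d. A i j n = B i j n)"

lemma padic_mat_cong_mult:
  "padic_mat_cong d n A A' \<Longrightarrow> padic_mat_cong d n B B' \<Longrightarrow>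
    padic_mat_cong d n (padic_mat_mult d p A B) (padic_mat_mult d p A' B')"
  by (simp add: padic_mat_cong_def padic_mat_mult_entry)

lemma padic_mat_cong_refl [simp]: "padic_mat_cong d n A A"
  by (simp add: padic_mat_cong_def)

lemma padic_mat_cong_mono:
  assumes A: "A \<in> padic_mat d p" and B: "B \<in> padic_mat d p"
    and "k \<le> n" and "padic_mat_cong d n A B"
  shows "padic_mat_cong d k A B"
  unfolding padic_mat_cong_def
proof (intro allI impI)
  fix i j assume ij: "i < d" "j < d"
  have "A i j \<in> padic_int p" "B i j \<in> padic_int p"
    using A B ij unfolding padic_mat_def by blast+
  then have "A i j k = A i j n mod int p ^ k" "B i j k = B i j n mod int p ^ k"
    using \<open>k \<le> n\<close> by (simp_all add: padic_int_level_mod)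
  then show "A i j k = B i j k"
    using assms(4) ij by (simp add: padic_mat_cong_def)
qed

lemma padic_mat_eq_iff_cong:
  assumes "A \<in> padic_mat d p" "B \<in> padic_mat d p"
  shows "A = B \<longleftrightarrow> (\<forall>n. padic_mat_cong d n A B)"
  using padic_mat_eqI[OF assms] by (auto simp: padic_mat_cong_def)

lemma CS_iff_cong_one:
  "A \<in> CS k d p \<longleftrightarrow> A \<in> padic_mat d p \<and> padic_mat_cong d k A (padic_mat_one d p)"
  unfolding CS_def padic_mat_cong_def by blast

lemma CS_subset_padic_mat: "CS k d p \<subseteq> padic_mat d p"
  unfolding CS_def by blast

lemma CS_antimono:
  assumes "0 < p" and "k \<le> m"
  shows "CS m d p \<subseteq> CS k d p"
proof
  fix A assume "A \<in> CS m d p"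
  then show "A \<in> CS k d p"
    using assms padic_mat_cong_mono[OF _ padic_mat_one_closed] unfolding CS_iff_cong_one by blast
qed

lemma padic_mat_one_in_CS: "0 < p \<Longrightarrow> padic_mat_one d p \<in> CS k d p"
  unfolding CS_iff_cong_one padic_mat_cong_def by (simp add: padic_mat_one_closed)

lemma CS_mult_closed:
  assumes p: "0 < p" and A: "A \<in> CS k d p" and B: "B \<in> CS k d p"
  shows "padic_mat_mult d p A B \<in> CS k d p"
proof -
  have "padic_mat_cong d k (padic_mat_mult d p A B)
      (padic_mat_mult d p (padic_mat_one d p) (padic_mat_one d p))"
    using A B unfolding CS_iff_cong_one by (intro padic_mat_cong_mult) auto
  then show ?thesis
    using A B p unfolding CS_iff_cong_one
    by (simp add: padic_mat_mult_closed padic_mat_mult_one_left padic_mat_one_closed)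
qed

lemma CS_iff_dvd:
  assumes A: "A \<in> padic_mat d p" and "k \<le> n"
  shows "A \<in> CS k d p \<longleftrightarrow> (\<forall>i<d. \<forall>j<d. int p ^ k dvd A i j n - of_bool (i = j))"
proof -
  have "A i j k = padic_mat_one d p i j k \<longleftrightarrow> int p ^ k dvd A i j n - of_bool (i = j)"
    if "i < d" "j < d" for i j
  proof -
    have "A i j \<in> padic_int p" using A that unfolding padic_mat_def by blast
    then have "A i j k = A i j n mod int p ^ k" using \<open>k \<le> n\<close> by (simp add: padic_int_level_mod)
    then show ?thesis using that by (simp add: padic_mat_one_entry mod_eq_dvd_iff)
  qed
  then show ?thesis using A unfolding CS_def by auto
qed

lemma CS_dvd:
  "A \<in> CS k d p \<Longrightarrow> k \<le> n \<Longrightarrow> i < d \<Longrightarrow> j < d \<Longrightarrow> int p ^ k dvd A i j n - of_bool (i = j)"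
  using CS_iff_dvd CS_subset_padic_mat by blast

lemma sum_mult_expand_at_identity:
  fixes C D :: "nat \<Rightarrow> nat \<Rightarrow> int"
  assumes "i < d" "j < d"
  shows "(\<Sum>l<d. C i l * D l j) = of_bool (i = j) + (C i j - of_bool (i = j)) + (D i j - of_bool (i = j))
          + (\<Sum>l<d. (C i l - of_bool (i = l)) * (D l j - of_bool (l = j)))"
proof -
  have "{..<d} \<inter> {i} = {i}" "{i} \<inter> {..<d} = {i}" "{..<d} \<inter> {j} = {j}"
    using assms by auto
  then have "(\<Sum>l<d. (C i l - of_bool (i = l)) * (D l j - of_bool (l = j)))
      = (\<Sum>l<d. C i l * D l j) - D i j - C i j + of_bool (i = j)"
    by (simp add: left_diff_distrib right_diff_distrib sum_subtractf)
  then show ?thesis by simp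
qed

lemma CS_mult_commute_cong:
  assumes A: "A \<in> CS a d p" and B: "B \<in> CS b d p"
  shows "padic_mat_cong d (a + b) (padic_mat_mult d p A B) (padic_mat_mult d p B A)"
  unfolding padic_mat_cong_def
proof (intro allI impI)
  fix i j assume ij: "i < d" "j < d"
  define E where "E i l = A i l (a + b) - of_bool (i = l)" for i l
  define F where "F i l = B i l (a + b) - of_bool (i = l)" for i l
  have E: "int p ^ a dvd E i l" and F: "int p ^ b dvd F i l" if "i < d" "l < d" for i l
    using A B that unfolding E_def F_def by (simp_all add: CS_dvd)
  have "(\<Sum>l<d. A i l (a + b) * B l j (a + b)) - (\<Sum>l<d. B i l (a + b) * A l j (a + b))
      = (\<Sum>l<d. E i l * F l j) - (\<Sum>l<d. F i l * E l j)"
    using sum_mult_expand_at_identity[OF ij, of "\<lambda>i l. A i l (a + b)" "\<lambda>i l. B i l (a + b)"]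
      sum_mult_expand_at_identity[OF ij, of "\<lambda>i l. B i l (a + b)" "\<lambda>i l. A i l (a + b)"]
    unfolding E_def F_def by simp
  also have "int p ^ (a + b) dvd \<dots>"
    unfolding power_add using E F ij
    by (intro dvd_diff dvd_sum) (auto intro: mult_dvd_mono simp: mult.commute[of "F _ _"])
  finally show "padic_mat_mult d p A B i j (a + b) = padic_mat_mult d p B A i j (a + b)"
    using ij by (simp add: padic_mat_mult_entry mod_eq_dvd_iff)
qed

lemma CS_group_simps [simp]:
  "carrier (CS_group u d p) = CS u d p"
  "monoid.mult (CS_group u d p) = padic_mat_mult d p"
  "one (CS_group u d p) = padic_mat_one d p"
  by (simp_all add: CS_group_def)

lemma CS_pow_closed:
  "0 < p \<Longrightarrow> A \<in> CS k d p \<Longrightarrow> A [^]\<^bsub>CS_group u d p\<^esub> (r::nat) \<in> CS k d p"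
  by (induction r) (simp_all add: padic_mat_one_in_CS CS_mult_closed)

lemma CS_pow_cong_linear:
  assumes A: "A \<in> CS m d p" and "i < d" "j < d"
  shows "int p ^ (m + m) dvd (A [^]\<^bsub>CS_group u d p\<^esub> k) i j (m + m) - of_bool (i = j)
           - int k * (A i j (m + m) - of_bool (i = j))"
  using \<open>i < d\<close> \<open>j < d\<close>
proof (induction k arbitrary: i j)
  case 0
  then show ?case by (simp add: padic_mat_one_entry mod_eq_dvd_iff[symmetric])
next
  case (Suc k)
  define C where "C = A [^]\<^bsub>CS_group u d p\<^esub> k"
  define E where "E i l = A i l (m + m) - of_bool (i = l)" for i l
  define S where "S = (\<Sum>l<d. (C i l (m + m) - of_bool (i = l)) * E l j)"
  have E: "int p ^ m dvd E i l" if "i < d" "l < d" for i l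
    using A that unfolding E_def by (simp add: CS_dvd)
  have IH: "int p ^ (m + m) dvd C i l (m + m) - of_bool (i = l) - int k * E i l"
    if "i < d" "l < d" for i l
    using Suc.IH that unfolding C_def E_def by blast
  have C: "int p ^ m dvd C i l (m + m) - of_bool (i = l)" if "i < d" "l < d" for i l
  proof -
    have "int p ^ m dvd C i l (m + m) - of_bool (i = l) - int k * E i l"
      using IH[OF that] by (rule dvd_trans[rotated]) (simp add: power_add)
    then show ?thesis using E[OF that] by (metis diff_add_cancel dvd_add dvd_mult)
  qed
  then have S: "int p ^ (m + m) dvd S"
    unfolding S_def power_add by (intro dvd_sum mult_dvd_mono C E Suc.prems) simp_all
  define CA where "CA = (\<Sum>l<d. C i l (m + m) * A l j (m + m))"
  have "(A [^]\<^bsub>CS_group u d p\<^esub> Suc k) i j (m + m) = CA mod int p ^ (m + m)"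
    using Suc.prems by (simp add: C_def CA_def padic_mat_mult_entry)
  moreover have "CA = of_bool (i = j) + (C i j (m + m) - of_bool (i = j)) + E i j + S"
    using sum_mult_expand_at_identity[OF Suc.prems, of "\<lambda>i l. C i l (m + m)" "\<lambda>i l. A i l (m + m)"]
    unfolding CA_def S_def E_def by simp
  ultimately have "(A [^]\<^bsub>CS_group u d p\<^esub> Suc k) i j (m + m) - of_bool (i = j) - int (Suc k) * E i j
      = (CA mod int p ^ (m + m) - CA) + S + (C i j (m + m) - of_bool (i = j) - int k * E i j)"
    by (simp add: distrib_right)
  also have "int p ^ (m + m) dvd \<dots>"
    using S IH Suc.prems by (intro dvd_add) (simp_all add: mod_eq_dvd_iff[symmetric])
  finally show ?case unfolding E_def .
qed

lemma CS_pow_p: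
  assumes p: "0 < p" and "1 \<le> m" and A: "A \<in> CS m d p"
  shows "A [^]\<^bsub>CS_group u d p\<^esub> p \<in> CS (Suc m) d p"
proof -
  have mat: "A [^]\<^bsub>CS_group u d p\<^esub> p \<in> padic_mat d p"
    using CS_pow_closed[OF p A] CS_subset_padic_mat by blast
  have "Suc m \<le> m + m" using \<open>1 \<le> m\<close> by simp
  moreover have "int p ^ Suc m dvd (A [^]\<^bsub>CS_group u d p\<^esub> p) i j (m + m) - of_bool (i = j)"
    if "i < d" "j < d" for i j
  proof -
    have "int p ^ m dvd A i j (m + m) - of_bool (i = j)"
      using A that by (simp add: CS_dvd)
    then have "int p ^ Suc m dvd int p * (A i j (m + m) - of_bool (i = j))"
      by simp
    moreover have "int p ^ Suc m dvd (A [^]\<^bsub>CS_group u d p\<^esub> p) i j (m + m) - of_bool (i = j)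
        - int p * (A i j (m + m) - of_bool (i = j))"
      using CS_pow_cong_linear[OF A that, of u p] le_imp_power_dvd[OF \<open>Suc m \<le> m + m\<close>, of "int p"]
      by (rule dvd_trans[rotated])
    ultimately show ?thesis by (metis diff_add_cancel dvd_add)
  qed
  ultimately show ?thesis using CS_iff_dvd[OF mat] by blast
qed

section \<open>The group CS(u) and its normal subgroups\<close>

lemma CS_group_monoid: "0 < p \<Longrightarrow> monoid (CS_group u d p)"
  by (rule monoidI)
    (simp_all add: CS_mult_closed padic_mat_one_in_CS padic_mat_mult_assoc
      padic_mat_mult_one_left padic_mat_mult_one_right CS_subset_padic_mat[THEN subsetD])

lemma CS_pow_p_power:
  assumes p: "0 < p" and "1 \<le> u" and x: "x \<in> CS u d p"
  shows "x [^]\<^bsub>CS_group u d p\<^esub> (p ^ k) \<in> CS (u + k) d p"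
proof (induction k)
  case 0
  then show ?case using x monoid.l_one[OF CS_group_monoid[OF p]] by simp
next
  case (Suc k)
  have "x [^]\<^bsub>CS_group u d p\<^esub> (p ^ Suc k) = (x [^]\<^bsub>CS_group u d p\<^esub> (p ^ k)) [^]\<^bsub>CS_group u d p\<^esub> p"
    using monoid.nat_pow_pow[OF CS_group_monoid[OF p]] x by (simp add: mult.commute)
  also have "\<dots> \<in> CS (Suc (u + k)) d p"
    using CS_pow_p[OF p _ Suc.IH] \<open>1 \<le> u\<close> by simp
  finally show ?case by simp
qed

lemma padic_mat_diagonal_closed:
  assumes Y: "\<And>n. Y n \<in> padic_mat d p" and cong: "\<And>n. padic_mat_cong d n (Y (Suc n)) (Y n)"
  shows "(\<lambda>i j n. Y n i j n) \<in> padic_mat d p"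
  unfolding padic_mat_def
proof (intro CollectI conjI allI impI)
  fix i j assume ij: "i < d \<and> j < d"
  then have Yij: "Y n i j \<in> padic_int p" for n using Y unfolding padic_mat_def by blast
  have "Y (Suc n) i j (Suc n) mod int p ^ n = Y n i j n" for n
    using padic_int_level_mod[OF Yij, of n "Suc n"] cong[of n] ij by (simp add: padic_mat_cong_def)
  then show "(\<lambda>n. Y n i j n) \<in> padic_int p"
    using Yij unfolding padic_int_def by simp
next
  fix i j assume "\<not> (i < d \<and> j < d)"
  then show "(\<lambda>n. Y n i j n) = padic_zero"
    using Y unfolding padic_mat_def by (simp add: padic_zero_def)
qed

lemma CS_pow_p_power_pred_cong:
  assumes p: "1 < p" and "1 \<le> u" and x: "x \<in> CS u d p"
  shows "padic_mat_cong d n (x [^]\<^bsub>CS_group u d p\<^esub> (p ^ Suc n - 1)) (x [^]\<^bsub>CS_group u d p\<^esub> (p ^ n - 1))"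
proof -
  interpret monoid "CS_group u d p" using p by (simp add: CS_group_monoid)
  let ?P = "\<lambda>k::nat. x [^]\<^bsub>CS_group u d p\<^esub> k"
  have "x \<in> carrier (CS_group u d p)" using x by simp
  moreover have "p ^ Suc n - 1 = (p ^ n - 1) + p ^ n * (p - 1)"
    using p by (simp add: algebra_simps diff_mult_distrib2 Suc_leI)
  ultimately have "?P (p ^ Suc n - 1) = ?P (p ^ n - 1) \<otimes>\<^bsub>CS_group u d p\<^esub> (?P (p ^ n) [^]\<^bsub>CS_group u d p\<^esub> (p - 1))"
    by (simp only: nat_pow_pow nat_pow_mult)
  moreover have "?P (p ^ n) \<in> CS n d p"
    using CS_pow_p_power[of p u x d n] CS_antimono[of p n "u + n" d] assms by auto
  then have "?P (p ^ n) [^]\<^bsub>CS_group u d p\<^esub> (p - 1) \<in> CS n d p"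
    using p by (simp add: CS_pow_closed)
  then have "padic_mat_cong d n
      (padic_mat_mult d p (?P (p ^ n - 1)) (?P (p ^ n) [^]\<^bsub>CS_group u d p\<^esub> (p - 1)))
      (padic_mat_mult d p (?P (p ^ n - 1)) (padic_mat_one d p))"
    by (intro padic_mat_cong_mult) (simp_all add: padic_mat_cong_def CS_iff_cong_one)
  moreover have "padic_mat_mult d p (?P (p ^ n - 1)) (padic_mat_one d p) = ?P (p ^ n - 1)"
    using x r_one[OF nat_pow_closed] by simp
  ultimately show ?thesis by simp
qed

lemma CS_left_inverse:
  assumes p: "1 < p" and u: "1 \<le> u" and x: "x \<in> CS u d p"
  shows "\<exists>y\<in>CS u d p. padic_mat_mult d p y x = padic_mat_one d p"
proof -
  interpret monoid "CS_group u d p" using p by (simp add: CS_group_monoid)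
  define Y where "Y n = x [^]\<^bsub>CS_group u d p\<^esub> (p ^ n - 1)" for n
  define y where "y = (\<lambda>i j n. Y n i j n)"
  have Y: "Y n \<in> CS u d p" for n
    using p x unfolding Y_def by (simp add: CS_pow_closed)
  have y_cong: "padic_mat_cong d n y (Y n)" for n
    unfolding padic_mat_cong_def y_def by simp
  have "Y n \<in> padic_mat d p" for n
    using Y CS_subset_padic_mat by blast
  moreover have "padic_mat_cong d n (Y (Suc n)) (Y n)" for n
    unfolding Y_def by (rule CS_pow_p_power_pred_cong[OF assms])
  ultimately have y: "y \<in> padic_mat d p"
    unfolding y_def by (rule padic_mat_diagonal_closed)
  have "padic_mat_cong d n (padic_mat_mult d p y x) (padic_mat_one d p)" for n
  proof -
    have "padic_mat_mult d p (Y n) x = x [^]\<^bsub>CS_group u d p\<^esub> Suc (p ^ n - 1)"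
      by (simp add: Y_def)
    also have "Suc (p ^ n - 1) = p ^ n"
      using p by simp
    also have "x [^]\<^bsub>CS_group u d p\<^esub> (p ^ n) \<in> CS n d p"
      using CS_pow_p_power[of p u x d n] CS_antimono[of p n "u + n" d] assms by auto
    finally show ?thesis
      using padic_mat_cong_mult[OF y_cong, of n x x] by (simp add: CS_iff_cong_one padic_mat_cong_def)
  qed
  moreover have "padic_mat_mult d p y x \<in> padic_mat d p"
    using p y x CS_subset_padic_mat by (simp add: padic_mat_mult_closed subset_iff)
  ultimately have "padic_mat_mult d p y x = padic_mat_one d p"
    using p padic_mat_one_closed[of p d] by (simp add: padic_mat_eq_iff_cong)
  moreover have "y \<in> CS u d p"
    using y Y[of u] y_cong[of u] by (simp add: CS_iff_cong_one padic_mat_cong_def)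
  ultimately show ?thesis by blast
qed

lemma CS_group_group:
  assumes "1 < p" and "1 \<le> u"
  shows "group (CS_group u d p)"
  using assms CS_left_inverse[OF assms]
  by (intro monoid.group_l_invI CS_group_monoid) simp_all

lemma CS_normal:
  assumes p: "1 < p" and u: "1 \<le> u" and "u \<le> k"
  shows "CS k d p \<lhd> CS_group u d p"
proof -
  interpret G: group "CS_group u d p" using p u by (rule CS_group_group)
  have sub: "CS k d p \<subseteq> carrier (CS_group u d p)"
    using p \<open>u \<le> k\<close> by (simp add: CS_antimono)
  have "inv\<^bsub>CS_group u d p\<^esub> h \<in> CS k d p" if h: "h \<in> CS k d p" for h
  proof -
    have hc: "h \<in> carrier (CS_group u d p)" using sub h by blast
    then have ic: "inv\<^bsub>CS_group u d p\<^esub> h \<in> carrier (CS_group u d p)" by (rule G.inv_closed)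
    have "padic_mat_cong d k (inv\<^bsub>CS_group u d p\<^esub> h \<otimes>\<^bsub>CS_group u d p\<^esub> h)
        (inv\<^bsub>CS_group u d p\<^esub> h \<otimes>\<^bsub>CS_group u d p\<^esub> \<one>\<^bsub>CS_group u d p\<^esub>)"
      using h unfolding CS_group_simps CS_iff_cong_one by (intro padic_mat_cong_mult) simp_all
    then have "padic_mat_cong d k (padic_mat_one d p) (inv\<^bsub>CS_group u d p\<^esub> h)"
      using G.l_inv[OF hc] G.r_one[OF ic] by simp
    then show ?thesis
      using ic CS_subset_padic_mat by (auto simp: CS_iff_cong_one padic_mat_cong_def)
  qed
  then have "subgroup (CS k d p) (CS_group u d p)"
    using sub p padic_mat_one_in_CS[of p d k] by (intro G.subgroupI) (auto simp: CS_mult_closed)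
  moreover have "x \<otimes>\<^bsub>CS_group u d p\<^esub> h \<otimes>\<^bsub>CS_group u d p\<^esub> inv\<^bsub>CS_group u d p\<^esub> x \<in> CS k d p"
    if x: "x \<in> carrier (CS_group u d p)" and h: "h \<in> CS k d p" for x h
  proof -
    have "padic_mat_cong d k (x \<otimes>\<^bsub>CS_group u d p\<^esub> h \<otimes>\<^bsub>CS_group u d p\<^esub> inv\<^bsub>CS_group u d p\<^esub> x)
        (x \<otimes>\<^bsub>CS_group u d p\<^esub> \<one>\<^bsub>CS_group u d p\<^esub> \<otimes>\<^bsub>CS_group u d p\<^esub> inv\<^bsub>CS_group u d p\<^esub> x)"
      using h unfolding CS_group_simps CS_iff_cong_one by (intro padic_mat_cong_mult) simp_all
    moreover have "x \<otimes>\<^bsub>CS_group u d p\<^esub> h \<otimes>\<^bsub>CS_group u d p\<^esub> inv\<^bsub>CS_group u d p\<^esub> x \<in> carrier (CS_group u d p)"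
      using x h sub by blast
    ultimately show ?thesis
      using G.r_one[OF x] G.r_inv[OF x] CS_subset_padic_mat by (auto simp: CS_iff_cong_one)
  qed
  ultimately show ?thesis by (simp add: G.normal_inv_iff)
qed

lemma CS_commutator:
  assumes p: "1 < p" and u: "1 \<le> u" "u \<le> a" "u \<le> b"
    and A: "A \<in> CS a d p" and B: "B \<in> CS b d p"
  shows "A \<otimes>\<^bsub>CS_group u d p\<^esub> B \<otimes>\<^bsub>CS_group u d p\<^esub> inv\<^bsub>CS_group u d p\<^esub> A
    \<otimes>\<^bsub>CS_group u d p\<^esub> inv\<^bsub>CS_group u d p\<^esub> B \<in> CS (a + b) d p"
proof -
  interpret G: group "CS_group u d p" using p u(1) by (rule CS_group_group)
  have AB: "A \<in> carrier (CS_group u d p)" "B \<in> carrier (CS_group u d p)"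
    using A B CS_antimono[of p u a d] CS_antimono[of p u b d] p u by auto
  have "padic_mat_cong d (a + b)
      (A \<otimes>\<^bsub>CS_group u d p\<^esub> B \<otimes>\<^bsub>CS_group u d p\<^esub> inv\<^bsub>CS_group u d p\<^esub> A \<otimes>\<^bsub>CS_group u d p\<^esub> inv\<^bsub>CS_group u d p\<^esub> B)
      (B \<otimes>\<^bsub>CS_group u d p\<^esub> A \<otimes>\<^bsub>CS_group u d p\<^esub> inv\<^bsub>CS_group u d p\<^esub> A \<otimes>\<^bsub>CS_group u d p\<^esub> inv\<^bsub>CS_group u d p\<^esub> B)"
    unfolding CS_group_simps
    by (intro padic_mat_cong_mult[OF padic_mat_cong_mult[OF CS_mult_commute_cong[OF A B]]] padic_mat_cong_refl)
  moreover have "B \<otimes>\<^bsub>CS_group u d p\<^esub> A \<otimes>\<^bsub>CS_group u d p\<^esub> inv\<^bsub>CS_group u d p\<^esub> A \<otimes>\<^bsub>CS_group u d p\<^esub> inv\<^bsub>CS_group u d p\<^esub> B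
      = \<one>\<^bsub>CS_group u d p\<^esub>"
    using G.m_assoc[OF AB(2,1) G.inv_closed[OF AB(1)]] G.r_inv[OF AB(1)] G.r_one[OF AB(2)] G.r_inv[OF AB(2)]
    by simp
  moreover have "A \<otimes>\<^bsub>CS_group u d p\<^esub> B \<otimes>\<^bsub>CS_group u d p\<^esub> inv\<^bsub>CS_group u d p\<^esub> A
      \<otimes>\<^bsub>CS_group u d p\<^esub> inv\<^bsub>CS_group u d p\<^esub> B \<in> carrier (CS_group u d p)"
    by (intro G.m_closed G.inv_closed AB)
  ultimately show ?thesis
    using CS_subset_padic_mat by (auto simp: CS_iff_cong_one)
qed

lemma comm_subgroup_CS_subset:
  assumes "1 < p" "1 \<le> u" "u \<le> a" "u \<le> b"
  shows "comm_subgroup (CS_group u d p) (CS a d p) (CS b d p) \<subseteq> CS (a + b) d p"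
proof -
  interpret group "CS_group u d p" using assms(1,2) by (rule CS_group_group)
  have "subgroup (CS (a + b) d p) (CS_group u d p)"
    using CS_normal[of p u "a + b" d] assms by (simp add: normal_imp_subgroup)
  then show ?thesis
    unfolding comm_subgroup_def using CS_commutator[OF assms]
    by (intro generate_subgroup_incl) blast+
qed

lemma pow_subgroup_CS_subset:
  assumes "1 < p" "1 \<le> u" "u \<le> m"
  shows "pow_subgroup (CS_group u d p) (CS m d p) p \<subseteq> CS (Suc m) d p"
proof -
  interpret group "CS_group u d p" using assms(1,2) by (rule CS_group_group)
  have "subgroup (CS (Suc m) d p) (CS_group u d p)"
    using CS_normal[of p u "Suc m" d] assms by (simp add: normal_imp_subgroup)
  then show ?thesis
    unfolding pow_subgroup_def using CS_pow_p[of p m _ d u] assms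
    by (intro generate_subgroup_incl) auto
qed

section \<open>Logarithmic reindexing\<close>

lemma ceiling_log_mono:
  fixes b x y :: real
  assumes "1 < b" "0 < x" "x \<le> y"
  shows "\<lceil>log b x\<rceil> \<le> \<lceil>log b y\<rceil>"
  using assms by (simp add: ceiling_mono)

lemma ceiling_log_mult_base:
  fixes b x :: real
  assumes "1 < b" "0 < x"
  shows "\<lceil>log b (x * b)\<rceil> = \<lceil>log b x\<rceil> + 1"
  using assms by (simp add: log_mult)

lemma ceiling_log_add_le:
  fixes b x y :: real
  assumes "2 \<le> b" "0 < x" "0 < y"
  shows "\<lceil>log b (x + y)\<rceil> \<le> max \<lceil>log b x\<rceil> \<lceil>log b y\<rceil> + 1"
proof -
  have "x + y \<le> max x y * b"
    using assms by (auto simp: max_def intro: order_trans[OF _ mult_left_mono[of 2 b]])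
  then have "\<lceil>log b (x + y)\<rceil> \<le> \<lceil>log b (max x y)\<rceil> + 1"
    using assms ceiling_log_mono[of b "x + y" "max x y * b"] ceiling_log_mult_base[of b "max x y"]
    by simp
  also have "\<lceil>log b (max x y)\<rceil> = max \<lceil>log b x\<rceil> \<lceil>log b y\<rceil>"
    using assms ceiling_log_mono[of b x y] ceiling_log_mono[of b y x] by (auto simp: max_def)
  finally show ?thesis by simp
qed

lemma ceiling_log_nonneg:
  fixes b x :: real
  assumes "1 < b" "1 \<le> x"
  shows "0 \<le> \<lceil>log b x\<rceil>"
proof -
  have "0 \<le> log b x" using assms by simp
  then show ?thesis by simp
qed

lemma Gamma_star_eq: "Gamma_star u d p i = CS (u + nat \<lceil>log (real p) (real i)\<rceil>) d p"
  by (simp add: Gamma_star_def Gamma_seq_def)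

lemma Gamma_star_1: "Gamma_star u d p 1 = CS u d p"
  by (simp add: Gamma_star_eq)

lemma Gamma_star_Suc_subset:
  assumes "1 < p" "1 \<le> i"
  shows "Gamma_star u d p (Suc i) \<subseteq> Gamma_star u d p i"
  unfolding Gamma_star_eq using assms
  by (intro CS_antimono add_left_mono nat_mono ceiling_log_mono) simp_all

lemma Gamma_star_normal: "1 < p \<Longrightarrow> 1 \<le> u \<Longrightarrow> Gamma_star u d p i \<lhd> CS_group u d p"
  unfolding Gamma_star_eq by (simp add: CS_normal)

lemma comm_subgroup_Gamma_star:
  assumes p: "1 < p" and u: "1 \<le> u" and "1 \<le> i" "1 \<le> j"
  shows "comm_subgroup (CS_group u d p) (Gamma_star u d p i) (Gamma_star u d p j)
    \<subseteq> Gamma_star u d p (i + j)"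
proof -
  let ?c = "\<lambda>i::nat. \<lceil>log (real p) (real i)\<rceil>"
  have "?c (i + j) \<le> max (?c i) (?c j) + 1"
    unfolding of_nat_add using assms by (intro ceiling_log_add_le) simp_all
  moreover have "0 \<le> ?c i" using assms by (intro ceiling_log_nonneg) simp_all
  moreover have "0 \<le> ?c j" using assms by (intro ceiling_log_nonneg) simp_all
  ultimately have "u + nat (?c (i + j)) \<le> (u + nat (?c i)) + (u + nat (?c j))"
    using u by linarith
  then show ?thesis
    unfolding Gamma_star_eq using assms
    by (intro order_trans[OF comm_subgroup_CS_subset CS_antimono]) simp_all
qed

lemma pow_subgroup_Gamma_star:
  assumes p: "1 < p" and u: "1 \<le> u" and "1 \<le> i"
  shows "pow_subgroup (CS_group u d p) (Gamma_star u d p i) p \<subseteq> Gamma_star u d p (i * p)"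
proof -
  have "\<lceil>log (real p) (real (i * p))\<rceil> = \<lceil>log (real p) (real i)\<rceil> + 1"
    unfolding of_nat_mult using assms by (intro ceiling_log_mult_base) simp_all
  moreover have "0 \<le> \<lceil>log (real p) (real i)\<rceil>"
    using assms by (intro ceiling_log_nonneg) simp_all
  ultimately have "u + nat \<lceil>log (real p) (real (i * p))\<rceil> = Suc (u + nat \<lceil>log (real p) (real i)\<rceil>)"
    by linarith
  then show ?thesis
    unfolding Gamma_star_eq using pow_subgroup_CS_subset[of p u "u + nat \<lceil>log (real p) (real i)\<rceil>" d] assms
    by simp
qed

theorem lemma3p1:
  fixes p d u :: nat
  assumes "Factorial_Ring.prime p" and "d > 0" and "u > 0" and "p = 2 \<longrightarrow> u \<ge> 2"
  shows "Gamma_star u d p 1 = CS u d p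
    \<and> (\<forall>i\<ge>1. Gamma_star u d p (Suc i) \<subseteq> Gamma_star u d p i)
    \<and> (\<forall>i\<ge>1. Gamma_star u d p i \<lhd> CS_group u d p)
    \<and> (\<forall>i\<ge>1. \<forall>j\<ge>1. comm_subgroup (CS_group u d p) (Gamma_star u d p i) (Gamma_star u d p j)
                      \<subseteq> Gamma_star u d p (i + j))
    \<and> (\<forall>i\<ge>1. pow_subgroup (CS_group u d p) (Gamma_star u d p i) p \<subseteq> Gamma_star u d p (i * p))"
proof -
  have "p \<noteq> 0" "p \<noteq> 1" using assms(1) by auto
  then have p: "1 < p" by simp
  have u: "1 \<le> u" using assms(3) by simp
  show ?thesis
    by (intro conjI allI impI Gamma_star_1 Gamma_star_Suc_subset Gamma_star_normal
        comm_subgroup_Gamma_star pow_subgroup_Gamma_star p u)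
qed

end
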